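(* Let $I\subseteq I_0=\{1,\dots,d\}$ and assume that $V^{jk}_{cc}$ is strictly increasing for every transition $j\to k$ of the model and every $c$ for which it is defined. Then for all $0\le t_1<t_2$ the increment $\mathbf V_I(t_2)-\mathbf V_I(t_1)$ is invertible if at least one of the following holds: (I1) for each $c\in I$, $E_c$ has an exclusive transition with respect to $I$; (I2) $I$ can be written as a disjoint union $I=I_1\cup I_2$ such that for each $c\in I_1$, $E_c$ has an exclusive transition with respect to $I$, and the increments of $\mathbf V_{I_2}$ are invertible.
   Context: Markov multi-state model on $\{0,\dots,l\}$ with transition intensities $\lambda^{jk}$; a transition of the model is $(j,k)$, $j\ne k$, with $\lambda^{jk}\not\equiv0$. Data: $X$ the Markov process with $X(0)=0$, $Z\in\{0,1\}$ treatment indicator, $C(t)=\tilde C\wedge(t-R)_+$ censoring at calendar time $t$ ($R$ entry time, $\tilde C$ dropout), $X$ independent of $(R,Z,\tilde C)$; for $E\subset\{1,\dots,l\}$, $T^E=\inf\{s:X(s)\in E\}$ and $\mu^{j\to E}(s)=\mathbb E[Z\mathbb 1\{X(s-)=j\}\mathbb 1\{s\le T^E\wedge C(t)\}]/\mathbb E[\mathbb 1\{X(s-)=j\}\mathbb 1\{s\le T^E\wedge C(t)\}]$, assumed independent of $t$; $q^{jk}(s)$ deterministic weights. Fix $E_1,\dots,E_d\subset\{1,\dots,l\}$. For $k\in E_{c_1}\cap E_{c_2}$, $j\notin E_{c_1}\cup E_{c_2}$: $V^{jk}_{c_1c_2}(t)=\int_{[0,t]}q^{jk}(s)^2\lambda^{jk}(s)\mathbb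 E[\mathbb 1\{X(s)=j\}\mathbb 1\{s\le C(t)\wedge T^{E_{c_1}\cup E_{c_2}}\}(Z-\mu^{j\to E_{c_1}}(s))(Z-\mu^{j\to E_{c_2}}(s))]ds$, and $\mathbf V(t)$ is the $d\times d$ matrix with entries $V_{c_1c_2}(t)=\sum_{k\in E_{c_1}\cap E_{c_2}}\sum_{j\notin E_{c_1}\cup E_{c_2}}V^{jk}_{c_1c_2}(t)$ (sums over transitions of the model). For $I\subseteq I_0$, $\mathbf V_I$ is the $|I|\times|I|$ submatrix with rows and columns indexed by $I$. A transition $j\to k$ of the model is exclusive for $E_c$ ($c\in I$) with respect to $I$ if $j\notin E_c$, $k\in E_c$, and for every $\tilde c\in I\setminus\{c\}$ either $j\in E_{\tilde c}$ or $k\notin E_{\tilde c}$. *)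

theory Defs
  imports "HOL-Probability.Probability" "Jordan_Normal_Form.Matrix"
begin

text \<open>Left limit X(s-) of a piecewise constant path (for s <= 0 we use X(0)).\<close>
definition left_val :: "(real \<Rightarrow> nat) \<Rightarrow> real \<Rightarrow> nat" where
  "left_val x s = (if s \<le> 0 then x 0 else (THE k. eventually (\<lambda>u. x u = k) (at_left s)))"

text \<open>Cadlag path with finitely many jumps on bounded time intervals (regular jump path on [0,oo)).\<close>
definition jump_path :: "(real \<Rightarrow> nat) \<Rightarrow> bool" where
  "jump_path x \<longleftrightarrow>
     (\<forall>s\<ge>0. eventually (\<lambda>u. x u = x s) (at_right s)) \<and>
     (\<forall>s>0. \<exists>k. eventually (\<lambda>u. x u = k) (at_left s)) \<and>
     (\<forall>T. finite {u \<in> {0..T}. left_val x u \<noteq> x u})"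

definition njumps :: "(real \<Rightarrow> nat) \<Rightarrow> nat \<Rightarrow> nat \<Rightarrow> real \<Rightarrow> nat" where
  "njumps x j k t = card {u \<in> {0<..t}. left_val x u = j \<and> x u = k}"

text \<open>Hitting time T^E = inf {s >= 0. X(s) in E} (infinity if never hit).\<close>
definition hit :: "(real \<Rightarrow> nat) \<Rightarrow> nat set \<Rightarrow> ereal" where
  "hit x E = Inf {ereal s | s. 0 \<le> s \<and> x s \<in> E}"

definition cens :: "ereal \<Rightarrow> real \<Rightarrow> real \<Rightarrow> ereal" where
  "cens Ct R t = min Ct (ereal (max (t - R) 0))"

text \<open>X is a Markov multi-state process on {0..l} with transition intensities lam,
  characterised through its jump counting processes: for every pair j ~= k the process
  N^{jk}(t) - int_0^t 1{X(u-)=j} lam^{jk}(u) du is a martingale w.r.t. the natural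
  filtration (tested against the generating cylinder events of the past).\<close>
definition markov_intensities ::
  "'a measure \<Rightarrow> ('a \<Rightarrow> real \<Rightarrow> nat) \<Rightarrow> nat \<Rightarrow> (nat \<Rightarrow> nat \<Rightarrow> real \<Rightarrow> real) \<Rightarrow> bool" where
  "markov_intensities M X l lam \<longleftrightarrow>
     (\<forall>j k. j \<le> l \<and> k \<le> l \<and> j \<noteq> k \<longrightarrow> lam j k \<in> borel_measurable borel \<and> (\<forall>s\<ge>0. 0 \<le> lam j k s) \<and>
            (\<forall>t. set_integrable lborel {0..t} (lam j k))) \<and>
     (\<forall>\<omega>\<in>space M. X \<omega> 0 = 0 \<and> (\<forall>s\<ge>0. X \<omega> s \<le> l) \<and> jump_path (X \<omega>)) \<and>
     (\<forall>s t n us xs j k. 0 \<le> s \<and> s \<le> t \<and> (\<forall>i<n. 0 \<le> us i \<and> us i \<le> s) \<and>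
        j \<le> l \<and> k \<le> l \<and> j \<noteq> k \<longrightarrow>
        integral\<^sup>L M (\<lambda>\<omega>. indicator {\<omega>'. \<forall>i<(n::nat). X \<omega>' (us i) = xs i} \<omega> *
              (real (njumps (X \<omega>) j k t) - real (njumps (X \<omega>) j k s)))
        = integral\<^sup>L M (\<lambda>\<omega>. indicator {\<omega>'. \<forall>i<n. X \<omega>' (us i) = xs i} \<omega> *
              (LINT u:{s<..t}|lborel. (if left_val (X \<omega>) u = j then lam j k u else 0))))"

definition is_transition :: "nat \<Rightarrow> (nat \<Rightarrow> nat \<Rightarrow> real \<Rightarrow> real) \<Rightarrow> nat \<Rightarrow> nat \<Rightarrow> bool" where
  "is_transition l lam j k \<longleftrightarrow> j \<le> l \<and> k \<le> l \<and> j \<noteq> k \<and> (\<exists>s\<ge>0. lam j k s \<noteq> 0)"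

definition mu_num :: "'a measure \<Rightarrow> ('a \<Rightarrow> real \<Rightarrow> nat) \<Rightarrow> ('a \<Rightarrow> real) \<Rightarrow> ('a \<Rightarrow> real)
    \<Rightarrow> ('a \<Rightarrow> ereal) \<Rightarrow> real \<Rightarrow> nat \<Rightarrow> nat set \<Rightarrow> real \<Rightarrow> real" where
  "mu_num M X Z R Ct t j E s = integral\<^sup>L M (\<lambda>\<omega>. Z \<omega> *
      indicator {\<omega>'. left_val (X \<omega>') s = j} \<omega> *
      indicator {\<omega>'. ereal s \<le> min (hit (X \<omega>') E) (cens (Ct \<omega>') (R \<omega>') t)} \<omega>)"

definition mu_den :: "'a measure \<Rightarrow> ('a \<Rightarrow> real \<Rightarrow> nat) \<Rightarrow> ('a \<Rightarrow> real)
    \<Rightarrow> ('a \<Rightarrow> ereal) \<Rightarrow> real \<Rightarrow> nat \<Rightarrow> nat set \<Rightarrow> real \<Rightarrow> real" where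
  "mu_den M X R Ct t j E s = integral\<^sup>L M (\<lambda>\<omega>.
      indicator {\<omega>'. left_val (X \<omega>') s = j} \<omega> *
      indicator {\<omega>'. ereal s \<le> min (hit (X \<omega>') E) (cens (Ct \<omega>') (R \<omega>') t)} \<omega>)"

definition Vjk :: "'a measure \<Rightarrow> ('a \<Rightarrow> real \<Rightarrow> nat) \<Rightarrow> ('a \<Rightarrow> real) \<Rightarrow> ('a \<Rightarrow> real)
    \<Rightarrow> ('a \<Rightarrow> ereal) \<Rightarrow> (nat \<Rightarrow> nat \<Rightarrow> real \<Rightarrow> real) \<Rightarrow> (nat \<Rightarrow> nat \<Rightarrow> real \<Rightarrow> real)
    \<Rightarrow> (nat \<Rightarrow> nat set \<Rightarrow> real \<Rightarrow> real) \<Rightarrow> (nat \<Rightarrow> nat set)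
    \<Rightarrow> nat \<Rightarrow> nat \<Rightarrow> nat \<Rightarrow> nat \<Rightarrow> real \<Rightarrow> real" where
  "Vjk M X Z R Ct lam q mu E j k c1 c2 t =
     (LINT s:{0..t}|lborel. (q j k s)\<^sup>2 * lam j k s *
        integral\<^sup>L M (\<lambda>\<omega>. indicator {\<omega>'. X \<omega>' s = j} \<omega> *
          indicator {\<omega>'. ereal s \<le> min (cens (Ct \<omega>') (R \<omega>') t) (hit (X \<omega>') (E c1 \<union> E c2))} \<omega> *
          (Z \<omega> - mu j (E c1) s) * (Z \<omega> - mu j (E c2) s)))"

definition Vent :: "'a measure \<Rightarrow> ('a \<Rightarrow> real \<Rightarrow> nat) \<Rightarrow> ('a \<Rightarrow> real) \<Rightarrow> ('a \<Rightarrow> real)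
    \<Rightarrow> ('a \<Rightarrow> ereal) \<Rightarrow> nat \<Rightarrow> (nat \<Rightarrow> nat \<Rightarrow> real \<Rightarrow> real) \<Rightarrow> (nat \<Rightarrow> nat \<Rightarrow> real \<Rightarrow> real)
    \<Rightarrow> (nat \<Rightarrow> nat set \<Rightarrow> real \<Rightarrow> real) \<Rightarrow> (nat \<Rightarrow> nat set)
    \<Rightarrow> nat \<Rightarrow> nat \<Rightarrow> real \<Rightarrow> real" where
  "Vent M X Z R Ct l lam q mu E c1 c2 t =
     (\<Sum>k\<in>{k. k \<le> l \<and> k \<in> E c1 \<inter> E c2}.
        \<Sum>j\<in>{j. j \<le> l \<and> j \<notin> E c1 \<union> E c2 \<and> is_transition l lam j k}.
           Vjk M X Z R Ct lam q mu E j k c1 c2 t)"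

definition submat_idx :: "nat set \<Rightarrow> (nat \<Rightarrow> nat \<Rightarrow> real) \<Rightarrow> real mat" where
  "submat_idx I A = mat (card I) (card I)
     (\<lambda>(a, b). A (sorted_list_of_set I ! a) (sorted_list_of_set I ! b))"

definition exclusive :: "nat \<Rightarrow> (nat \<Rightarrow> nat \<Rightarrow> real \<Rightarrow> real) \<Rightarrow> (nat \<Rightarrow> nat set)
    \<Rightarrow> nat set \<Rightarrow> nat \<Rightarrow> nat \<Rightarrow> nat \<Rightarrow> bool" where
  "exclusive l lam E I c j k \<longleftrightarrow> is_transition l lam j k \<and> j \<notin> E c \<and> k \<in> E c \<and>
     (\<forall>c'\<in>I - {c}. j \<in> E c' \<or> k \<notin> E c')"

end

theory Submission
  imports Defs "Jordan_Normal_Form.Determinant"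
begin

(*
  Let x lie in the kernel of the increment D = V_I(t2) - V_I(t1), so that x' D x = 0.
  Expanding V over the transitions j -> k of the model, x' D x is a sum over transitions of
    int_0^t q^2 lambda E[1{X(s) = j, s <= C(t)} (sum_c x_c 1{s <= T^(E_c)} (Z - mu^(j -> E_c)(s)))^2] ds
  evaluated between t = t1 and t = t2, the inner sum ranging over the c in I with j not in E_c and
  k in E_c.  Censoring C(t) grows with calendar time t, so every summand is nonnegative, hence zero.
  For an exclusive transition of E_c only c itself occurs, and the summand is
  x_c^2 (V^jk_cc(t2) - V^jk_cc(t1)) with a positive second factor, so x_c = 0.  Under (I2) the
  remaining coordinates then solve the kernel equations of the invertible increment of V_(I2).
*)

lemma invertible_mat_iff_mult_vec_eq_zero:
  fixes A :: "'a :: field mat"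
  assumes A: "A \<in> carrier_mat n n"
  shows "invertible_mat A \<longleftrightarrow> (\<forall>v\<in>carrier_vec n. A *\<^sub>v v = 0\<^sub>v n \<longrightarrow> v = 0\<^sub>v n)"
proof
  assume "invertible_mat A"
  then obtain B where AB: "A * B = 1\<^sub>m n" and BA: "B * A = 1\<^sub>m (dim_row B)"
    using A unfolding invertible_mat_def inverts_mat_def by auto
  have B: "B \<in> carrier_mat n n"
    using AB BA A by (metis carrier_matD carrier_matI index_mult_mat(2,3) index_one_mat(2,3))
  then have BA: "B * A = 1\<^sub>m n" using BA by simp
  show "\<forall>v\<in>carrier_vec n. A *\<^sub>v v = 0\<^sub>v n \<longrightarrow> v = 0\<^sub>v n"
  proof (intro ballI impI)
    fix v :: "'a vec" assume v: "v \<in> carrier_vec n" and Av: "A *\<^sub>v v = 0\<^sub>v n"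
    have "v = (B * A) *\<^sub>v v" using BA v by simp
    also have "\<dots> = B *\<^sub>v (A *\<^sub>v v)" by (rule assoc_mult_mat_vec[OF B A v])
    also have "\<dots> = 0\<^sub>v n" using Av B by (intro eq_vecI) (auto simp: scalar_prod_def)
    finally show "v = 0\<^sub>v n" .
  qed
next
  assume "\<forall>v\<in>carrier_vec n. A *\<^sub>v v = 0\<^sub>v n \<longrightarrow> v = 0\<^sub>v n"
  then have "det A \<noteq> 0" using det_0_iff_vec_prod_zero_field[OF A] by blast
  from det_non_zero_imp_unit[OF A this, of "()"]
  obtain B where "B \<in> carrier_mat n n" "B * A = 1\<^sub>m n" "A * B = 1\<^sub>m n"
    unfolding Units_def ring_mat_def by auto
  then show "invertible_mat A" unfolding invertible_mat_def inverts_mat_def using A by auto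
qed

lemma bij_betw_nth_sorted_list_of_set:
  "finite I \<Longrightarrow> bij_betw ((!) (sorted_list_of_set I)) {..<card I} I"
  by (rule bij_betw_nth) simp_all

lemma dim_submat_idx [simp]:
  "dim_row (submat_idx I A) = card I" "dim_col (submat_idx I A) = card I"
  by (simp_all add: submat_idx_def)

lemma submat_idx_carrier: "submat_idx I A \<in> carrier_mat (card I) (card I)"
  by (simp add: carrier_matI)

lemma submat_idx_diff:
  "submat_idx I A - submat_idx I B = submat_idx I (\<lambda>i j. A i j - B i j)"
  by (rule eq_matI) (auto simp: submat_idx_def)

lemma submat_idx_mult_vec:
  assumes "finite I" "a < card I"
  shows "(submat_idx I A *\<^sub>v vec (card I) (\<lambda>b. x (sorted_list_of_set I ! b))) $ a
           = (\<Sum>c\<in>I. A (sorted_list_of_set I ! a) c * x c)"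
  using assms sum.reindex_bij_betw[OF bij_betw_nth_sorted_list_of_set[OF assms(1)]]
  by (simp add: submat_idx_def scalar_prod_def atLeast0LessThan)

lemma ball_sorted_list_of_set_iff:
  assumes "finite I"
  shows "(\<forall>c\<in>I. P c) \<longleftrightarrow> (\<forall>b<card I. P (sorted_list_of_set I ! b))"
  by (subst bij_betw_imp_surj_on[OF bij_betw_nth_sorted_list_of_set[OF assms], symmetric]) auto

lemma submat_idx_mult_vec_eq_zero_iff:
  assumes fin: "finite I"
  shows "submat_idx I A *\<^sub>v vec (card I) (\<lambda>b. x (sorted_list_of_set I ! b)) = 0\<^sub>v (card I) \<longleftrightarrow>
           (\<forall>c1\<in>I. (\<Sum>c2\<in>I. A c1 c2 * x c2) = 0)"
proof -
  let ?v = "vec (card I) (\<lambda>b. x (sorted_list_of_set I ! b))"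
  have "submat_idx I A *\<^sub>v ?v = 0\<^sub>v (card I) \<longleftrightarrow> (\<forall>a<card I. (submat_idx I A *\<^sub>v ?v) $ a = 0)"
    unfolding vec_eq_iff by simp
  also have "\<dots> \<longleftrightarrow> (\<forall>a<card I. (\<Sum>c2\<in>I. A (sorted_list_of_set I ! a) c2 * x c2) = 0)"
    using submat_idx_mult_vec[OF fin] by simp
  finally show ?thesis by (simp only: ball_sorted_list_of_set_iff[OF fin])
qed

lemma invertible_submat_idx_iff:
  fixes A :: "nat \<Rightarrow> nat \<Rightarrow> real"
  assumes fin: "finite I"
  shows "invertible_mat (submat_idx I A) \<longleftrightarrow>
           (\<forall>x. (\<forall>c1\<in>I. (\<Sum>c2\<in>I. A c1 c2 * x c2) = 0) \<longrightarrow> (\<forall>c\<in>I. x c = 0))"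
proof -
  let ?L = "sorted_list_of_set I"
  let ?v = "\<lambda>x. vec (card I) (\<lambda>b. x (?L ! b))"
  have vec_of: "\<exists>x. v = ?v x" if "v \<in> carrier_vec (card I)" for v
  proof
    show "v = ?v (\<lambda>c. v $ the_inv_into {..<card I} ((!) ?L) c)"
      using that bij_betw_nth_sorted_list_of_set[OF fin]
      by (intro eq_vecI) (auto simp: bij_betw_def the_inv_into_f_f)
  qed
  have zero_iff: "?v x = 0\<^sub>v (card I) \<longleftrightarrow> (\<forall>c\<in>I. x c = 0)" for x
    by (auto simp: vec_eq_iff ball_sorted_list_of_set_iff[OF fin])
  note kernel_iff = submat_idx_mult_vec_eq_zero_iff[OF fin]
  show ?thesis
    unfolding invertible_mat_iff_mult_vec_eq_zero[OF submat_idx_carrier]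
  proof (intro iffI allI impI ballI)
    fix x c
    assume inj: "\<forall>v\<in>carrier_vec (card I). submat_idx I A *\<^sub>v v = 0\<^sub>v (card I) \<longrightarrow> v = 0\<^sub>v (card I)"
      and "\<forall>c1\<in>I. (\<Sum>c2\<in>I. A c1 c2 * x c2) = 0" and "c \<in> I"
    then have "submat_idx I A *\<^sub>v ?v x = 0\<^sub>v (card I)" using kernel_iff by blast
    then have "?v x = 0\<^sub>v (card I)" using inj vec_carrier by blast
    then show "x c = 0" using zero_iff \<open>c \<in> I\<close> by blast
  next
    fix v :: "real vec"
    assume inj: "\<forall>x. (\<forall>c1\<in>I. (\<Sum>c2\<in>I. A c1 c2 * x c2) = 0) \<longrightarrow> (\<forall>c\<in>I. x c = 0)"
      and "v \<in> carrier_vec (card I)" and Av: "submat_idx I A *\<^sub>v v = 0\<^sub>v (card I)"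
    then obtain x where v: "v = ?v x" using vec_of by blast
    then have "\<forall>c1\<in>I. (\<Sum>c2\<in>I. A c1 c2 * x c2) = 0" using Av kernel_iff by blast
    then show "v = 0\<^sub>v (card I)" using v inj zero_iff by blast
  qed
qed

lemma kernel_vanishes_Un:
  fixes A :: "'i \<Rightarrow> 'i \<Rightarrow> 'a :: semiring_0"
  assumes fin: "finite (I1 \<union> I2)"
    and ker: "\<forall>c1\<in>I1 \<union> I2. (\<Sum>c2\<in>I1 \<union> I2. A c1 c2 * x c2) = 0"
    and x1: "\<forall>c\<in>I1. x c = 0"
    and inj2: "\<forall>y. (\<forall>c1\<in>I2. (\<Sum>c2\<in>I2. A c1 c2 * y c2) = 0) \<longrightarrow> (\<forall>c\<in>I2. y c = 0)"
  shows "\<forall>c\<in>I1 \<union> I2. x c = 0"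
proof -
  have "(\<Sum>c2\<in>I2. A c1 c2 * x c2) = (\<Sum>c2\<in>I1 \<union> I2. A c1 c2 * x c2)" for c1
    using fin x1 by (intro sum.mono_neutral_left) auto
  then have "\<forall>c\<in>I2. x c = 0" using ker inj2 by simp
  then show ?thesis using x1 by blast
qed

lemma integral_double_sum:
  assumes "\<And>a b. a \<in> A \<Longrightarrow> b \<in> B \<Longrightarrow> integrable M (f a b)"
  shows "integrable M (\<lambda>\<omega>. \<Sum>a\<in>A. \<Sum>b\<in>B. f a b \<omega>)"
    and "(\<integral>\<omega>. (\<Sum>a\<in>A. \<Sum>b\<in>B. f a b \<omega>) \<partial>M) = (\<Sum>a\<in>A. \<Sum>b\<in>B. integral\<^sup>L M (f a b))"
  using assms by (simp_all add: Bochner_Integration.integral_sum)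

lemma ereal_le_hit_iff_rat:
  assumes jp: "jump_path x"
  shows "ereal s \<le> hit x A \<longleftrightarrow>
    (\<forall>r::rat. 0 \<le> real_of_rat r \<and> real_of_rat r < s \<longrightarrow> x (real_of_rat r) \<notin> A)"
proof
  assume H: "ereal s \<le> hit x A"
  show "\<forall>r::rat. 0 \<le> real_of_rat r \<and> real_of_rat r < s \<longrightarrow> x (real_of_rat r) \<notin> A"
  proof (intro allI impI)
    fix r :: rat assume r: "0 \<le> real_of_rat r \<and> real_of_rat r < s"
    show "x (real_of_rat r) \<notin> A"
    proof
      assume "x (real_of_rat r) \<in> A"
      then have "hit x A \<le> ereal (real_of_rat r)" unfolding hit_def using r by (auto intro!: Inf_lower)
      then have "ereal s \<le> ereal (real_of_rat r)" using H by (rule order.trans[rotated])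
      with r show False by simp
    qed
  qed
next
  assume H: "\<forall>r::rat. 0 \<le> real_of_rat r \<and> real_of_rat r < s \<longrightarrow> x (real_of_rat r) \<notin> A"
  show "ereal s \<le> hit x A" unfolding hit_def
  proof (rule Inf_greatest, clarify)
    fix u assume u: "0 \<le> u" "x u \<in> A"
    show "ereal s \<le> ereal u"
    proof (rule ccontr)
      assume "\<not> ereal s \<le> ereal u"
      then have us: "u < s" by simp
      have "eventually (\<lambda>v. x v = x u) (at_right u)" using jp u unfolding jump_path_def by blast
      then obtain b where b: "b > u" "\<And>y. y > u \<Longrightarrow> y < b \<Longrightarrow> x y = x u"
        unfolding eventually_at_right_field by blast
      obtain r where r: "r \<in> \<rat>" "u < r" "r < min b s" using Rats_dense_in_real[of u "min b s"] b us by auto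
      obtain r' where r': "r = real_of_rat r'" using r(1) by (auto elim: Rats_cases)
      have "x r = x u" using b r by auto
      moreover have "0 \<le> real_of_rat r'" using u r r' by linarith
      ultimately show False using u H r r' by auto
    qed
  qed
qed

lemma left_val_eq_iff_rat:
  assumes jp: "jump_path x" and s: "s > 0"
  shows "left_val x s = v \<longleftrightarrow>
    (\<exists>n::nat. \<forall>r::rat. s - 1 / real (Suc n) < real_of_rat r \<and> real_of_rat r < s \<longrightarrow> x (real_of_rat r) = v)"
proof -
  obtain k where k: "eventually (\<lambda>u. x u = k) (at_left s)" using jp s unfolding jump_path_def by blast
  have lv: "left_val x s = k" unfolding left_val_def using s
  proof (simp, intro the_equality k)
    fix k' assume "eventually (\<lambda>u. x u = k') (at_left s)"
    with k have "eventually (\<lambda>u. k' = k) (at_left s)" by eventually_elim auto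
    then show "k' = k" by (simp add: trivial_limit_at_left_real)
  qed
  obtain b where b: "b < s" "\<And>y. y > b \<Longrightarrow> y < s \<Longrightarrow> x y = k"
    using k unfolding eventually_at_left_field by blast
  show ?thesis
  proof
    assume "left_val x s = v"
    then have kv: "k = v" using lv by simp
    obtain n where n: "inverse (real (Suc n)) < s - b" using b(1) reals_Archimedean[of "s - b"] by auto
    show "\<exists>n::nat. \<forall>r::rat. s - 1 / real (Suc n) < real_of_rat r \<and> real_of_rat r < s \<longrightarrow> x (real_of_rat r) = v"
    proof (intro exI[of _ n] allI impI)
      fix r :: rat assume r: "s - 1 / real (Suc n) < real_of_rat r \<and> real_of_rat r < s"
      have "1 / real (Suc n) = inverse (real (Suc n))" by (simp add: divide_inverse)
      then have "b < real_of_rat r" using r n by linarith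
      then show "x (real_of_rat r) = v" using b r kv by auto
    qed
  next
    assume "\<exists>n::nat. \<forall>r::rat. s - 1 / real (Suc n) < real_of_rat r \<and> real_of_rat r < s \<longrightarrow> x (real_of_rat r) = v"
    then obtain n where n: "\<forall>r::rat. s - 1 / real (Suc n) < real_of_rat r \<and> real_of_rat r < s \<longrightarrow> x (real_of_rat r) = v" by blast
    have "max b (s - 1 / real (Suc n)) < s" using b by auto
    then obtain r where r: "r \<in> \<rat>" "max b (s - 1 / real (Suc n)) < r" "r < s" using Rats_dense_in_real by blast
    obtain r' where r': "r = real_of_rat r'" using r(1) by (auto elim: Rats_cases)
    have "x r = k" using b r by auto
    moreover have "x r = v" using n r r' by auto
    ultimately show "left_val x s = v" using lv by simp
  qed
qed

lemma hit_Un: "hit x (A \<union> B) = min (hit x A) (hit x B)"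
proof -
  have "{ereal s |s. 0 \<le> s \<and> x s \<in> A \<union> B} = {ereal s |s. 0 \<le> s \<and> x s \<in> A} \<union> {ereal s |s. 0 \<le> s \<and> x s \<in> B}"
    by auto
  then show ?thesis unfolding hit_def by (simp add: Inf_union_distrib inf_min)
qed

lemma cens_mono: "t1 \<le> t2 \<Longrightarrow> cens C R t1 \<le> cens C R t2"
  unfolding cens_def by (rule min.mono) (simp_all add: max_def)

locale censored_multistate = prob_space M for M :: "'a measure" +
  fixes X :: "'a \<Rightarrow> real \<Rightarrow> nat"
    and Z R :: "'a \<Rightarrow> real" and Ct :: "'a \<Rightarrow> ereal"
    and l :: nat and lam :: "nat \<Rightarrow> nat \<Rightarrow> real \<Rightarrow> real"
  assumes markov: "markov_intensities M X l lam"
    and X_meas: "(\<lambda>(\<omega>, s). X \<omega> s) \<in> measurable (M \<Otimes>\<^sub>M lborel) (count_space UNIV)"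
    and Z_meas [measurable]: "Z \<in> borel_measurable M"
    and Z01: "\<forall>\<omega>\<in>space M. Z \<omega> \<in> {0, 1}"
    and R_meas [measurable]: "R \<in> borel_measurable M"
    and Ct_meas [measurable]: "Ct \<in> borel_measurable M"
begin

lemma jump_path_X: "\<omega> \<in> space M \<Longrightarrow> jump_path (X \<omega>)"
  using markov unfolding markov_intensities_def by blast

lemma
  assumes "is_transition l lam j k"
  shows lam_measurable: "lam j k \<in> borel_measurable borel"
    and lam_nonneg: "s \<ge> 0 \<Longrightarrow> lam j k s \<ge> 0"
  using assms markov unfolding is_transition_def markov_intensities_def by blast+

lemma X_measurable [measurable]: "(\<lambda>\<omega>. X \<omega> s) \<in> measurable M (count_space UNIV)"
proof -
  have "(\<lambda>\<omega>. (\<omega>, s)) \<in> measurable M (M \<Otimes>\<^sub>M lborel)" by measurable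
  from measurable_comp[OF this X_meas] show ?thesis by (simp add: o_def)
qed

lemma X_measurable_joint [measurable]:
  "(\<lambda>p. X (snd p) (fst p)) \<in> measurable (lborel \<Otimes>\<^sub>M M) (count_space UNIV)"
proof -
  have "(\<lambda>p. (snd p, fst p)) \<in> measurable (lborel \<Otimes>\<^sub>M M) (M \<Otimes>\<^sub>M lborel)" by measurable
  from measurable_comp[OF this X_meas] show ?thesis by (simp add: o_def case_prod_beta)
qed

lemma cens_measurable_joint [measurable]:
  "(\<lambda>p. cens (Ct (snd p)) (R (snd p)) t) \<in> borel_measurable (lborel \<Otimes>\<^sub>M M)"
  unfolding cens_def by measurable

lemma cens_measurable [measurable]: "(\<lambda>\<omega>. cens (Ct \<omega>) (R \<omega>) t) \<in> borel_measurable M"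
  unfolding cens_def by measurable

lemma hit_measurable_joint [measurable]:
  "Measurable.pred (lborel \<Otimes>\<^sub>M M) (\<lambda>p. ereal (fst p) \<le> hit (X (snd p)) A)"
proof -
  have "Measurable.pred (lborel \<Otimes>\<^sub>M M) (\<lambda>p. \<forall>r::rat. 0 \<le> real_of_rat r \<and> real_of_rat r < fst p
          \<longrightarrow> X (snd p) (real_of_rat r) \<notin> A)"
    by measurable
  then show ?thesis
    by (rule measurable_cong[THEN iffD1, rotated])
      (auto simp: space_pair_measure ereal_le_hit_iff_rat jump_path_X)
qed

lemma hit_measurable [measurable]: "Measurable.pred M (\<lambda>\<omega>. ereal s \<le> hit (X \<omega>) A)"
proof -
  have "(\<lambda>\<omega>. (s, \<omega>)) \<in> measurable M (lborel \<Otimes>\<^sub>M M)" by measurable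
  from measurable_comp[OF this hit_measurable_joint] show ?thesis by (simp add: o_def)
qed

lemma left_val_measurable [measurable]:
  assumes "s \<ge> 0"
  shows "(\<lambda>\<omega>. left_val (X \<omega>) s) \<in> measurable M (count_space UNIV)"
proof (cases "s = 0")
  case True
  then show ?thesis by (simp add: left_val_def)
next
  case False
  with assms have s: "s > 0" by simp
  show ?thesis
  proof (rule measurable_count_space_eq_countable[THEN iffD2, OF countableI_type], intro conjI ballI)
    fix v :: nat
    have "Measurable.pred M (\<lambda>\<omega>. \<exists>n::nat. \<forall>r::rat. s - 1 / real (Suc n) < real_of_rat r
            \<and> real_of_rat r < s \<longrightarrow> X \<omega> (real_of_rat r) = v)"
      by measurable
    then have "Measurable.pred M (\<lambda>\<omega>. left_val (X \<omega>) s = v)"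
      by (rule measurable_cong[THEN iffD1, rotated]) (simp add: left_val_eq_iff_rat[OF jump_path_X s])
    then show "(\<lambda>\<omega>. left_val (X \<omega>) s) -` {v} \<inter> space M \<in> sets M"
      by (simp add: pred_def vimage_def Int_def conj_commute)
  qed auto
qed

definition jump_event :: "real \<Rightarrow> 'a set" where
  "jump_event s = {\<omega> \<in> space M. left_val (X \<omega>) s \<noteq> X \<omega> s}"

lemma jump_event_sets:
  assumes "s \<ge> 0"
  shows "jump_event s \<in> events"
proof -
  note left_val_measurable[OF assms, measurable]
  have "Measurable.pred M (\<lambda>\<omega>. \<exists>v::nat. left_val (X \<omega>) s = v \<and> X \<omega> s \<noteq> v)"
    by measurable
  then show ?thesis unfolding jump_event_def pred_def by (simp add: eq_commute)
qed

definition fixed_jump_times :: "real set" where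
  "fixed_jump_times = {s. 0 < s \<and> prob (jump_event s) \<noteq> 0}"

lemma finite_likely_jump_times:
  assumes eps: "\<epsilon> > 0"
  shows "finite {s. 0 < s \<and> s \<le> T \<and> prob (jump_event s) > \<epsilon>}" (is "finite ?S")
proof (rule ccontr)
  assume "infinite ?S"
  then obtain f :: "nat \<Rightarrow> real" where f: "inj f" "range f \<subseteq> ?S"
    using infinite_countable_subset by blast
  define A where "A i = jump_event (f i)" for i
  define C where "C N = (\<Union>i\<in>{N..}. A i)" for N
  have f_S: "0 < f i" "f i \<le> T" "prob (A i) > \<epsilon>" for i using f(2) by (auto simp: A_def)
  have A_ev: "A i \<in> events" for i unfolding A_def using f_S(1)[of i] by (intro jump_event_sets) simp
  have C_ev: "C N \<in> events" for N unfolding C_def using A_ev by auto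
  have "decseq C" unfolding C_def by (intro decseq_SucI UN_mono) auto
  then have lim: "(\<lambda>N. prob (C N)) \<longlonglongrightarrow> prob (\<Inter>N. C N)"
    using C_ev by (intro finite_Lim_measure_decseq) auto
  have "\<epsilon> \<le> prob (C N)" for N
    using f_S(3)[of N] finite_measure_mono[of "A N" "C N"] C_ev by (force simp: C_def)
  then have "\<epsilon> \<le> prob (\<Inter>N. C N)" using lim by (intro LIMSEQ_le_const) auto
  then have "(\<Inter>N. C N) \<noteq> {}" using eps by auto
  then obtain \<omega> where w: "\<And>N. \<omega> \<in> C N" by blast
  have w_space: "\<omega> \<in> space M" using w[of 0] unfolding C_def A_def jump_event_def by auto
  have "infinite {i. \<omega> \<in> A i}" unfolding infinite_nat_iff_unbounded_le
    using w unfolding C_def by auto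
  then have "infinite (f ` {i. \<omega> \<in> A i})"
    using f(1) by (metis finite_imageD inj_on_subset subset_UNIV)
  moreover have "f ` {i. \<omega> \<in> A i} \<subseteq> {u \<in> {0..T}. left_val (X \<omega>) u \<noteq> X \<omega> u}"
    using f_S unfolding A_def jump_event_def by (auto simp: less_imp_le)
  moreover have "finite {u \<in> {0..T}. left_val (X \<omega>) u \<noteq> X \<omega> u}"
    using jump_path_X[OF w_space] unfolding jump_path_def by blast
  ultimately show False using finite_subset by blast
qed

lemma countable_fixed_jump_times: "countable fixed_jump_times"
proof -
  let ?S = "\<lambda>n T::nat. {s. 0 < s \<and> s \<le> real T \<and> prob (jump_event s) > 1 / real (Suc n)}"
  have "fixed_jump_times \<subseteq> (\<Union>n. \<Union>T. ?S n T)"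
  proof
    fix s assume "s \<in> fixed_jump_times"
    then have p: "prob (jump_event s) > 0" "s > 0"
      by (auto simp: fixed_jump_times_def zero_less_measure_iff)
    obtain n where "inverse (real (Suc n)) < prob (jump_event s)"
      using reals_Archimedean[OF p(1)] by auto
    moreover obtain T :: nat where "s \<le> real T" using real_arch_simple by blast
    ultimately show "s \<in> (\<Union>n. \<Union>T. ?S n T)" using p by (auto simp: divide_inverse)
  qed
  moreover have "countable (\<Union>n. \<Union>T. ?S n T)"
    by (intro countable_UN countableI_type countable_finite finite_likely_jump_times) simp
  ultimately show ?thesis using countable_subset by blast
qed

lemma AE_left_val_eq:
  assumes "s \<ge> 0" "s \<notin> fixed_jump_times"
  shows "AE \<omega> in M. left_val (X \<omega>) s = X \<omega> s"
proof (cases "s = 0")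
  case True
  then show ?thesis by (simp add: left_val_def)
next
  case False
  with assms have "jump_event s \<in> null_sets M"
    by (auto simp: fixed_jump_times_def null_sets_def emeasure_eq_measure jump_event_sets)
  then show ?thesis by (rule AE_I') (auto simp: jump_event_def)
qed

text \<open>The indicator of being at risk uses \<open>X(s)\<close> where the definitions of \<open>\<mu>\<close> use the left
  limit \<open>X(s-)\<close>; the two agree almost surely outside the countably many fixed jump times.\<close>

definition at_risk :: "nat \<Rightarrow> real \<Rightarrow> nat set \<Rightarrow> real \<Rightarrow> 'a \<Rightarrow> real" where
  "at_risk j t A s \<omega> = indicator {\<omega>'. X \<omega>' s = j} \<omega> *
     indicator {\<omega>'. ereal s \<le> min (cens (Ct \<omega>') (R \<omega>') t) (hit (X \<omega>') A)} \<omega>"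

definition cov_integrand :: "nat \<Rightarrow> real \<Rightarrow> nat set \<Rightarrow> real \<Rightarrow> real \<Rightarrow> real \<Rightarrow> 'a \<Rightarrow> real" where
  "cov_integrand j t A a b s \<omega> = at_risk j t A s \<omega> * (Z \<omega> - a) * (Z \<omega> - b)"

definition treated_fraction :: "nat \<Rightarrow> real \<Rightarrow> nat set \<Rightarrow> real \<Rightarrow> real" where
  "treated_fraction j t A s =
     (\<integral>\<omega>. Z \<omega> * at_risk j t A s \<omega> \<partial>M) / (\<integral>\<omega>. at_risk j t A s \<omega> \<partial>M)"

lemma at_risk_if:
  "at_risk j t A s \<omega> =
     (if X \<omega> s = j \<and> ereal s \<le> cens (Ct \<omega>) (R \<omega>) t \<and> ereal s \<le> hit (X \<omega>) A then 1 else 0)"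
  by (simp add: at_risk_def indicator_def)

lemma at_risk_measurable_joint [measurable]:
  "(\<lambda>p. at_risk j t A (fst p) (snd p)) \<in> borel_measurable (lborel \<Otimes>\<^sub>M M)"
proof -
  have [measurable]: "fst \<in> borel_measurable (lborel \<Otimes>\<^sub>M M)"
    by (metis measurable_fst measurable_lborel1)
  show ?thesis unfolding at_risk_if by measurable
qed

lemma at_risk_measurable [measurable]: "at_risk j t A s \<in> borel_measurable M"
proof -
  have "(\<lambda>\<omega>. (s, \<omega>)) \<in> measurable M (lborel \<Otimes>\<^sub>M M)" by measurable
  from measurable_comp[OF this at_risk_measurable_joint] show ?thesis by (simp add: o_def)
qed

lemma integrable_at_risk: "integrable M (at_risk j t A s)"
  by (rule integrable_const_bound[where B=1]) (simp_all add: at_risk_if)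

lemma integrable_cov_integrand: "integrable M (cov_integrand j t A a b s)"
proof (rule integrable_const_bound[where B="(1 + \<bar>a\<bar>) * (1 + \<bar>b\<bar>)"])
  have "\<bar>Z \<omega> - a\<bar> \<le> 1 + \<bar>a\<bar>" "\<bar>Z \<omega> - b\<bar> \<le> 1 + \<bar>b\<bar>" if "\<omega> \<in> space M" for \<omega>
    using Z01 that by auto
  then show "AE \<omega> in M. norm (cov_integrand j t A a b s \<omega>) \<le> (1 + \<bar>a\<bar>) * (1 + \<bar>b\<bar>)"
    by (intro AE_I2) (simp add: cov_integrand_def at_risk_if abs_mult mult_mono)
qed (unfold cov_integrand_def, measurable)

lemma treated_fraction_measurable [measurable]: "treated_fraction j t A \<in> borel_measurable borel"
proof -
  have "(\<lambda>s. \<integral>\<omega>. Z \<omega> * at_risk j t A s \<omega> \<partial>M) \<in> borel_measurable lborel"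
    "(\<lambda>s. \<integral>\<omega>. at_risk j t A s \<omega> \<partial>M) \<in> borel_measurable lborel"
    by (rule borel_measurable_lebesgue_integral[unfolded case_prod_beta], measurable)+
  then show ?thesis unfolding treated_fraction_def[abs_def] by simp
qed

lemma integral_cov_integrand_measurable:
  assumes [measurable]: "a \<in> borel_measurable borel" "b \<in> borel_measurable borel"
  shows "(\<lambda>s. \<integral>\<omega>. cov_integrand j t A (a s) (b s) s \<omega> \<partial>M) \<in> borel_measurable borel"
proof -
  have [measurable]: "fst \<in> borel_measurable (lborel \<Otimes>\<^sub>M M)"
    by (metis measurable_fst measurable_lborel1)
  show ?thesis unfolding cov_integrand_def
    by (rule borel_measurable_lebesgue_integral[unfolded case_prod_beta]) measurable
qed

end

locale multistate_covariance = censored_multistate +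
  fixes d :: nat and q :: "nat \<Rightarrow> nat \<Rightarrow> real \<Rightarrow> real"
    and mu :: "nat \<Rightarrow> nat set \<Rightarrow> real \<Rightarrow> real"
    and E :: "nat \<Rightarrow> nat set"
  assumes mu_def: "\<forall>t s j c. 0 \<le> s \<and> j \<le> l \<and> c \<in> {1..d} \<and> mu_den M X R Ct t j (E c) s \<noteq> 0
                     \<longrightarrow> mu j (E c) s = mu_num M X Z R Ct t j (E c) s / mu_den M X R Ct t j (E c) s"
    and q_meas: "\<forall>j k. is_transition l lam j k \<longrightarrow> q j k \<in> borel_measurable borel"
    and incr: "\<forall>c\<in>{1..d}. \<forall>j k. is_transition l lam j k \<and> j \<notin> E c \<and> k \<in> E c \<longrightarrow>
                 strict_mono_on {0..} (Vjk M X Z R Ct lam q mu E j k c c)"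
begin

lemma
  assumes s: "s \<ge> 0" "s \<notin> fixed_jump_times"
  shows mu_den_eq_integral_at_risk: "mu_den M X R Ct t j A s = (\<integral>\<omega>. at_risk j t A s \<omega> \<partial>M)"
    and mu_num_eq_integral_at_risk: "mu_num M X Z R Ct t j A s = (\<integral>\<omega>. Z \<omega> * at_risk j t A s \<omega> \<partial>M)"
proof -
  note left_val_measurable[OF s(1), measurable]
  let ?r = "\<lambda>\<omega>. if left_val (X \<omega>) s = j \<and> ereal s \<le> cens (Ct \<omega>) (R \<omega>) t \<and> ereal s \<le> hit (X \<omega>) A
                then 1 else 0 :: real"
  have ae: "AE \<omega> in M. ?r \<omega> = at_risk j t A s \<omega>"
    using AE_left_val_eq[OF s] by eventually_elim (simp add: at_risk_if)
  have "mu_den M X R Ct t j A s = integral\<^sup>L M ?r"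
    unfolding mu_den_def by (intro Bochner_Integration.integral_cong) (auto simp: indicator_def)
  also have "\<dots> = (\<integral>\<omega>. at_risk j t A s \<omega> \<partial>M)"
    by (rule integral_cong_AE[OF _ _ ae]) measurable
  finally show "mu_den M X R Ct t j A s = (\<integral>\<omega>. at_risk j t A s \<omega> \<partial>M)" .
  have "mu_num M X Z R Ct t j A s = (\<integral>\<omega>. Z \<omega> * ?r \<omega> \<partial>M)"
    unfolding mu_num_def by (intro Bochner_Integration.integral_cong) (auto simp: indicator_def)
  also have "\<dots> = (\<integral>\<omega>. Z \<omega> * at_risk j t A s \<omega> \<partial>M)"
    using ae by (intro integral_cong_AE) (measurable, auto)
  finally show "mu_num M X Z R Ct t j A s = (\<integral>\<omega>. Z \<omega> * at_risk j t A s \<omega> \<partial>M)" .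
qed

lemma mu_eq_treated_fraction:
  assumes "s \<ge> 0" "s \<notin> fixed_jump_times" "j \<le> l" "c \<in> {1..d}"
    and "(\<integral>\<omega>. at_risk j t (E c) s \<omega> \<partial>M) \<noteq> 0"
  shows "mu j (E c) s = treated_fraction j t (E c) s"
proof -
  have "mu_den M X R Ct t j (E c) s \<noteq> 0"
    using assms(5) mu_den_eq_integral_at_risk[OF assms(1,2)] by simp
  then have "mu j (E c) s = mu_num M X Z R Ct t j (E c) s / mu_den M X R Ct t j (E c) s"
    using mu_def assms(1,3,4) by blast
  then show ?thesis
    by (simp add: treated_fraction_def mu_den_eq_integral_at_risk[OF assms(1,2)]
        mu_num_eq_integral_at_risk[OF assms(1,2)])
qed

text \<open>\<open>\<mu>\<close> is unconstrained where the at-risk probability vanishes, hence need not be measurable;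
  but there the integrand vanishes almost surely, so \<open>\<mu>\<close> may be replaced by the measurable
  \<open>treated_fraction\<close>.\<close>

lemma integral_cov_integrand_mu_eq:
  assumes s: "s \<ge> 0" "s \<notin> fixed_jump_times" and j: "j \<le> l" and c: "c1 \<in> {1..d}" "c2 \<in> {1..d}"
  shows "(\<integral>\<omega>. cov_integrand j t (E c1 \<union> E c2) (mu j (E c1) s) (mu j (E c2) s) s \<omega> \<partial>M) =
         (\<integral>\<omega>. cov_integrand j t (E c1 \<union> E c2)
                (treated_fraction j t (E c1) s) (treated_fraction j t (E c2) s) s \<omega> \<partial>M)"
proof (cases "(\<integral>\<omega>. at_risk j t (E c1 \<union> E c2) s \<omega> \<partial>M) = 0")
  case True
  moreover have "AE \<omega> in M. 0 \<le> at_risk j t (E c1 \<union> E c2) s \<omega>"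
    by (simp add: at_risk_if)
  ultimately have "AE \<omega> in M. at_risk j t (E c1 \<union> E c2) s \<omega> = 0"
    using integral_nonneg_eq_0_iff_AE[OF integrable_at_risk] by blast
  then have "AE \<omega> in M. cov_integrand j t (E c1 \<union> E c2) a b s \<omega> = 0" for a b
    by eventually_elim (simp add: cov_integrand_def)
  then show ?thesis by (simp add: integral_eq_zero_AE)
next
  case False
  have "(\<integral>\<omega>. at_risk j t (E c) s \<omega> \<partial>M) \<noteq> 0" if "c = c1 \<or> c = c2" for c
  proof -
    have "(\<integral>\<omega>. at_risk j t (E c1 \<union> E c2) s \<omega> \<partial>M) \<le> (\<integral>\<omega>. at_risk j t (E c) s \<omega> \<partial>M)"
      using that by (intro integral_mono integrable_at_risk) (auto simp: at_risk_if hit_Un)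
    moreover have "(\<integral>\<omega>. at_risk j t (E c1 \<union> E c2) s \<omega> \<partial>M) \<ge> 0"
      by (intro integral_nonneg_AE) (simp add: at_risk_if)
    ultimately show ?thesis using False by linarith
  qed
  then have "mu j (E c1) s = treated_fraction j t (E c1) s" "mu j (E c2) s = treated_fraction j t (E c2) s"
    using mu_eq_treated_fraction[OF s j] c by blast+
  then show ?thesis by simp
qed

definition weight :: "nat \<Rightarrow> nat \<Rightarrow> real \<Rightarrow> real" where
  "weight j k s = (q j k s)\<^sup>2 * lam j k s"

definition V_integrand :: "nat \<Rightarrow> nat \<Rightarrow> real \<Rightarrow> nat \<Rightarrow> nat \<Rightarrow> real \<Rightarrow> real" where
  "V_integrand j k t c1 c2 s = indicator {0..t} s *
     (weight j k s * (\<integral>\<omega>. cov_integrand j t (E c1 \<union> E c2) (mu j (E c1) s) (mu j (E c2) s) s \<omega> \<partial>M))"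

lemma Vjk_eq_integral_V_integrand:
  "Vjk M X Z R Ct lam q mu E j k c1 c2 t = integral\<^sup>L lborel (V_integrand j k t c1 c2)"
  unfolding Vjk_def set_lebesgue_integral_def V_integrand_def weight_def cov_integrand_def at_risk_def
  by simp

lemma weight_measurable:
  assumes "is_transition l lam j k"
  shows "weight j k \<in> borel_measurable borel"
proof -
  have [measurable]: "lam j k \<in> borel_measurable borel" "q j k \<in> borel_measurable borel"
    using assms lam_measurable q_meas by blast+
  show ?thesis unfolding weight_def[abs_def] by measurable
qed

lemma weight_nonneg: "is_transition l lam j k \<Longrightarrow> s \<ge> 0 \<Longrightarrow> weight j k s \<ge> 0"
  unfolding weight_def by (simp add: lam_nonneg)

lemma V_integrand_measurable:
  assumes tr: "is_transition l lam j k" and c: "c1 \<in> {1..d}" "c2 \<in> {1..d}"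
  shows "V_integrand j k t c1 c2 \<in> borel_measurable lborel"
proof (rule measurable_discrete_difference[where X=fixed_jump_times])
  note weight_measurable[OF tr, measurable]
  have [measurable]: "(\<lambda>s. \<integral>\<omega>. cov_integrand j t (E c1 \<union> E c2)
          (treated_fraction j t (E c1) s) (treated_fraction j t (E c2) s) s \<omega> \<partial>M) \<in> borel_measurable borel"
    by (intro integral_cov_integrand_measurable treated_fraction_measurable)
  show "(\<lambda>s. indicator {0..t} s * (weight j k s * (\<integral>\<omega>. cov_integrand j t (E c1 \<union> E c2)
          (treated_fraction j t (E c1) s) (treated_fraction j t (E c2) s) s \<omega> \<partial>M)))
        \<in> borel_measurable lborel"
    by measurable
  have "j \<le> l" using tr unfolding is_transition_def by simp
  then show "indicator {0..t} s * (weight j k s * (\<integral>\<omega>. cov_integrand j t (E c1 \<union> E c2)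
          (treated_fraction j t (E c1) s) (treated_fraction j t (E c2) s) s \<omega> \<partial>M))
        = V_integrand j k t c1 c2 s" if "s \<notin> fixed_jump_times" for s
    unfolding V_integrand_def using integral_cov_integrand_mu_eq[OF _ that _ c]
    by (cases "s \<in> {0..t}") auto
qed (auto simp: countable_fixed_jump_times)

definition enters :: "nat \<Rightarrow> nat \<Rightarrow> nat \<Rightarrow> bool" where
  "enters j k c \<longleftrightarrow> is_transition l lam j k \<and> j \<notin> E c \<and> k \<in> E c"

lemma AE_V_integrand_0: "AE s in lborel. V_integrand j k 0 c1 c2 s = 0"
  using AE_lborel_singleton[of 0] by eventually_elim (simp add: V_integrand_def)

lemma Vjk_diag_strict_mono:
  assumes "enters j k c" "c \<in> {1..d}" "0 \<le> t1" "t1 < t2"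
  shows "Vjk M X Z R Ct lam q mu E j k c c t1 < Vjk M X Z R Ct lam q mu E j k c c t2"
proof -
  have "strict_mono_on {0..} (Vjk M X Z R Ct lam q mu E j k c c)"
    using incr assms(1,2) unfolding enters_def by blast
  from strict_mono_onD[OF this, of t1 t2] assms(3,4) show ?thesis by simp
qed

text \<open>No integrability of \<open>q\<^sup>2 \<lambda>\<close> is needed: strict monotonicity makes the Bochner integral
  of a diagonal integrand nonzero, which forces integrability.\<close>

lemma integrable_V_integrand_diag:
  assumes c: "enters j k c" "c \<in> {1..d}" and t: "t \<ge> 0"
  shows "integrable lborel (V_integrand j k t c c)"
proof (cases "t = 0")
  case True
  have "V_integrand j k 0 c c \<in> borel_measurable lborel"
    using c by (intro V_integrand_measurable) (auto simp: enters_def)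
  from integrable_cong_AE[OF this borel_measurable_const AE_V_integrand_0] True
  show ?thesis by simp
next
  case False
  with t have "Vjk M X Z R Ct lam q mu E j k c c 0 < Vjk M X Z R Ct lam q mu E j k c c t"
    by (intro Vjk_diag_strict_mono c) simp_all
  moreover have "Vjk M X Z R Ct lam q mu E j k c c 0 = 0"
    unfolding Vjk_eq_integral_V_integrand by (rule integral_eq_zero_AE[OF AE_V_integrand_0])
  ultimately have "integral\<^sup>L lborel (V_integrand j k t c c) \<noteq> 0"
    by (simp add: Vjk_eq_integral_V_integrand)
  then show ?thesis using not_integrable_integral_eq by blast
qed

lemma abs_integral_cov_integrand_le:
  "\<bar>\<integral>\<omega>. cov_integrand j t (A \<union> B) a b s \<omega> \<partial>M\<bar> \<le>
     ((\<integral>\<omega>. cov_integrand j t A a a s \<omega> \<partial>M) + (\<integral>\<omega>. cov_integrand j t B b b s \<omega> \<partial>M)) / 2"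
proof -
  have "\<bar>cov_integrand j t (A \<union> B) a b s \<omega>\<bar> \<le>
          (cov_integrand j t A a a s \<omega> + cov_integrand j t B b b s \<omega>) / 2" for \<omega>
    using sum_squares_bound[of "\<bar>Z \<omega> - a\<bar>" "\<bar>Z \<omega> - b\<bar>"]
    by (auto simp: cov_integrand_def at_risk_if hit_Un abs_mult power2_eq_square)
  then have "\<bar>\<integral>\<omega>. cov_integrand j t (A \<union> B) a b s \<omega> \<partial>M\<bar> \<le>
      (\<integral>\<omega>. (cov_integrand j t A a a s \<omega> + cov_integrand j t B b b s \<omega>) / 2 \<partial>M)"
    by (intro order_trans[OF integral_abs_bound] integral_mono integrable_abs
        integrable_divide Bochner_Integration.integrable_add integrable_cov_integrand)
  then show ?thesis by (simp add: integrable_cov_integrand)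
qed

lemma integrable_V_integrand:
  assumes c: "enters j k c1" "enters j k c2" "c1 \<in> {1..d}" "c2 \<in> {1..d}" and t: "t \<ge> 0"
  shows "integrable lborel (V_integrand j k t c1 c2)"
proof (rule Bochner_Integration.integrable_bound)
  show "integrable lborel (\<lambda>s. (V_integrand j k t c1 c1 s + V_integrand j k t c2 c2 s) / 2)"
    using integrable_V_integrand_diag c t by simp
  show "V_integrand j k t c1 c2 \<in> borel_measurable lborel"
    using c by (intro V_integrand_measurable) (auto simp: enters_def)
  have tr: "is_transition l lam j k" using c by (simp add: enters_def)
  show "AE s in lborel. norm (V_integrand j k t c1 c2 s) \<le>
                         norm ((V_integrand j k t c1 c1 s + V_integrand j k t c2 c2 s) / 2)"
  proof (rule AE_I2)
    fix s
    show "norm (V_integrand j k t c1 c2 s) \<le>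
            norm ((V_integrand j k t c1 c1 s + V_integrand j k t c2 c2 s) / 2)"
    proof (cases "s \<in> {0..t}")
      case True
      let ?I = "\<lambda>A a b. \<integral>\<omega>. cov_integrand j t A a b s \<omega> \<partial>M"
      let ?a = "mu j (E c1) s" and ?b = "mu j (E c2) s"
      have w: "weight j k s \<ge> 0" using True weight_nonneg[OF tr] by simp
      have "?I A a a \<ge> 0" for A a
        by (intro integral_nonneg_AE) (simp add: cov_integrand_def at_risk_if)
      then have "0 \<le> weight j k s * ((?I (E c1) ?a ?a + ?I (E c2) ?b ?b) / 2)"
        using w by simp
      moreover have "\<bar>weight j k s * ?I (E c1 \<union> E c2) ?a ?b\<bar>
                       \<le> weight j k s * ((?I (E c1) ?a ?a + ?I (E c2) ?b ?b) / 2)"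
        unfolding abs_mult abs_of_nonneg[OF w]
        by (intro mult_left_mono[OF abs_integral_cov_integrand_le w])
      ultimately show ?thesis using True by (simp add: V_integrand_def algebra_simps)
    qed (simp add: V_integrand_def)
  qed
qed

definition cov_form :: "nat \<Rightarrow> nat set \<Rightarrow> (nat \<Rightarrow> real) \<Rightarrow> real \<Rightarrow> real \<Rightarrow> real" where
  "cov_form j T x t s = (\<Sum>c1\<in>T. \<Sum>c2\<in>T. x c1 * x c2 *
     (\<integral>\<omega>. cov_integrand j t (E c1 \<union> E c2) (mu j (E c1) s) (mu j (E c2) s) s \<omega> \<partial>M))"

lemma sum_cov_integrand_eq_square:
  "(\<Sum>c1\<in>T. \<Sum>c2\<in>T. x c1 * x c2 * cov_integrand j t (E c1 \<union> E c2) (a c1) (a c2) s \<omega>) =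
     (if X \<omega> s = j \<and> ereal s \<le> cens (Ct \<omega>) (R \<omega>) t then 1 else 0) *
     (\<Sum>c\<in>T. x c * (if ereal s \<le> hit (X \<omega>) (E c) then 1 else 0) * (Z \<omega> - a c))\<^sup>2"
proof -
  let ?g = "if X \<omega> s = j \<and> ereal s \<le> cens (Ct \<omega>) (R \<omega>) t then 1 else 0 :: real"
  let ?y = "\<lambda>c. x c * (if ereal s \<le> hit (X \<omega>) (E c) then 1 else 0) * (Z \<omega> - a c)"
  have term_eq: "x c1 * x c2 * cov_integrand j t (E c1 \<union> E c2) (a c1) (a c2) s \<omega> = ?g * (?y c1 * ?y c2)"
    for c1 c2 by (simp add: cov_integrand_def at_risk_if hit_Un)
  have "(\<Sum>c1\<in>T. \<Sum>c2\<in>T. x c1 * x c2 * cov_integrand j t (E c1 \<union> E c2) (a c1) (a c2) s \<omega>)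
               = (\<Sum>c1\<in>T. \<Sum>c2\<in>T. ?g * (?y c1 * ?y c2))"
    by (intro sum.cong refl term_eq)
  also have "\<dots> = ?g * ((\<Sum>c\<in>T. ?y c) * (\<Sum>c\<in>T. ?y c))"
    unfolding sum_product by (simp only: sum_distrib_left)
  finally show ?thesis by (simp only: power2_eq_square)
qed

lemma cov_form_eq_integral:
  "cov_form j T x t s = (\<integral>\<omega>. (\<Sum>c1\<in>T. \<Sum>c2\<in>T.
     x c1 * x c2 * cov_integrand j t (E c1 \<union> E c2) (mu j (E c1) s) (mu j (E c2) s) s \<omega>) \<partial>M)"
  unfolding cov_form_def
  by (subst integral_double_sum(2)) (simp_all add: integrable_cov_integrand)

lemma cov_form_nonneg: "0 \<le> cov_form j T x t s"
  unfolding cov_form_eq_integral sum_cov_integrand_eq_square by (intro integral_nonneg_AE) simp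

lemma cov_form_mono_time:
  assumes "t1 \<le> t2"
  shows "cov_form j T x t1 s \<le> cov_form j T x t2 s"
  unfolding cov_form_eq_integral
proof (intro integral_mono integral_double_sum(1) integrable_mult_right integrable_cov_integrand)
  fix \<omega>
  show "(\<Sum>c1\<in>T. \<Sum>c2\<in>T. x c1 * x c2 * cov_integrand j t1 (E c1 \<union> E c2) (mu j (E c1) s) (mu j (E c2) s) s \<omega>)
     \<le> (\<Sum>c1\<in>T. \<Sum>c2\<in>T. x c1 * x c2 * cov_integrand j t2 (E c1 \<union> E c2) (mu j (E c1) s) (mu j (E c2) s) s \<omega>)"
    unfolding sum_cov_integrand_eq_square
    using cens_mono[OF assms, of "Ct \<omega>" "R \<omega>"] by (auto intro: order_trans)
qed

lemma Vjk_form_eq_integral: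
  assumes T: "\<forall>c\<in>T. enters j k c \<and> c \<in> {1..d}" and t: "t \<ge> 0"
  shows "integrable lborel (\<lambda>s. indicator {0..t} s * (weight j k s * cov_form j T x t s))"
    and "(\<Sum>c1\<in>T. \<Sum>c2\<in>T. x c1 * x c2 * Vjk M X Z R Ct lam q mu E j k c1 c2 t) =
           (\<integral>s. indicator {0..t} s * (weight j k s * cov_form j T x t s) \<partial>lborel)"
proof -
  have sum_eq: "(\<Sum>c1\<in>T. \<Sum>c2\<in>T. x c1 * x c2 * V_integrand j k t c1 c2 s) =
                  indicator {0..t} s * (weight j k s * cov_form j T x t s)" for s
    unfolding V_integrand_def cov_form_def sum_distrib_left by (intro sum.cong refl) (simp add: mult_ac)
  have "integrable lborel (\<lambda>s. x c1 * x c2 * V_integrand j k t c1 c2 s)"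
    if "c1 \<in> T" "c2 \<in> T" for c1 c2
    using T t that by (intro integrable_mult_right integrable_V_integrand) auto
  note double = integral_double_sum[where f="\<lambda>c1 c2 s. x c1 * x c2 * V_integrand j k t c1 c2 s"
      and A=T and B=T, OF this]
  show "integrable lborel (\<lambda>s. indicator {0..t} s * (weight j k s * cov_form j T x t s))"
    using double(1) by (simp add: sum_eq)
  show "(\<Sum>c1\<in>T. \<Sum>c2\<in>T. x c1 * x c2 * Vjk M X Z R Ct lam q mu E j k c1 c2 t) =
          (\<integral>s. indicator {0..t} s * (weight j k s * cov_form j T x t s) \<partial>lborel)"
    using double(2) by (simp add: sum_eq Vjk_eq_integral_V_integrand)
qed

lemma Vjk_increment_form_nonneg:
  assumes tr: "is_transition l lam j k" and T: "\<forall>c\<in>T. enters j k c \<and> c \<in> {1..d}"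
    and t: "0 \<le> t1" "t1 \<le> t2"
  shows "0 \<le> (\<Sum>c1\<in>T. \<Sum>c2\<in>T. x c1 * x c2 *
                (Vjk M X Z R Ct lam q mu E j k c1 c2 t2 - Vjk M X Z R Ct lam q mu E j k c1 c2 t1))"
proof -
  let ?F = "\<lambda>t s. indicator {0..t} s * (weight j k s * cov_form j T x t s)"
  have "?F t1 s \<le> ?F t2 s" for s
  proof (cases "0 \<le> s")
    case True
    have "weight j k s \<ge> 0" using weight_nonneg[OF tr True] .
    then show ?thesis
      using t cov_form_nonneg cov_form_mono_time[OF t(2)]
      by (auto simp: indicator_def intro: mult_left_mono)
  qed (simp add: indicator_def)
  then have "0 \<le> (\<integral>s. ?F t2 s - ?F t1 s \<partial>lborel)" by (simp add: integral_nonneg)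
  also have "\<dots> = (\<Sum>c1\<in>T. \<Sum>c2\<in>T. x c1 * x c2 * Vjk M X Z R Ct lam q mu E j k c1 c2 t2)
                 - (\<Sum>c1\<in>T. \<Sum>c2\<in>T. x c1 * x c2 * Vjk M X Z R Ct lam q mu E j k c1 c2 t1)"
    using T t by (simp add: Vjk_form_eq_integral)
  finally show ?thesis by (simp add: right_diff_distrib sum_subtractf)
qed

lemma Vent_eq_sum_enters:
  "Vent M X Z R Ct l lam q mu E c1 c2 t =
     (\<Sum>(j, k)\<in>{..l} \<times> {..l}. if enters j k c1 \<and> enters j k c2
                                  then Vjk M X Z R Ct lam q mu E j k c1 c2 t else 0)"
proof -
  have "Vent M X Z R Ct l lam q mu E c1 c2 t =
    (\<Sum>k\<in>{k\<in>{..l}. k \<in> E c1 \<inter> E c2}. \<Sum>j\<in>{j\<in>{..l}. j \<notin> E c1 \<union> E c2 \<and> is_transition l lam j k}.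
       Vjk M X Z R Ct lam q mu E j k c1 c2 t)"
    unfolding Vent_def by (intro sum.cong) auto
  also have "\<dots> = (\<Sum>k\<in>{..l}. \<Sum>j\<in>{..l}.
      if enters j k c1 \<and> enters j k c2 then Vjk M X Z R Ct lam q mu E j k c1 c2 t else 0)"
    unfolding sum.inter_filter[OF finite_atMost] by (auto simp: enters_def intro!: sum.cong)
  also have "\<dots> = (\<Sum>(j, k)\<in>{..l} \<times> {..l}.
      if enters j k c1 \<and> enters j k c2 then Vjk M X Z R Ct lam q mu E j k c1 c2 t else 0)"
    by (subst sum.swap) (simp add: sum.cartesian_product)
  finally show ?thesis .
qed

lemma Vent_increment_form_eq:
  assumes "finite I"
  shows "(\<Sum>c1\<in>I. \<Sum>c2\<in>I. x c1 * x c2 *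
            (Vent M X Z R Ct l lam q mu E c1 c2 t2 - Vent M X Z R Ct l lam q mu E c1 c2 t1)) =
         (\<Sum>(j, k)\<in>{..l} \<times> {..l}. \<Sum>c1\<in>{c\<in>I. enters j k c}. \<Sum>c2\<in>{c\<in>I. enters j k c}.
            x c1 * x c2 * (Vjk M X Z R Ct lam q mu E j k c1 c2 t2 - Vjk M X Z R Ct lam q mu E j k c1 c2 t1))"
proof -
  let ?D = "\<lambda>j k c1 c2. x c1 * x c2 *
              (Vjk M X Z R Ct lam q mu E j k c1 c2 t2 - Vjk M X Z R Ct lam q mu E j k c1 c2 t1)"
  have "x c1 * x c2 *
          (Vent M X Z R Ct l lam q mu E c1 c2 t2 - Vent M X Z R Ct l lam q mu E c1 c2 t1) =
        (\<Sum>(j, k)\<in>{..l} \<times> {..l}. if enters j k c1 \<and> enters j k c2 then ?D j k c1 c2 else 0)" for c1 c2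
    unfolding Vent_eq_sum_enters sum_subtractf[symmetric] sum_distrib_left
    by (intro sum.cong refl) auto
  then have "(\<Sum>c1\<in>I. \<Sum>c2\<in>I. x c1 * x c2 *
                (Vent M X Z R Ct l lam q mu E c1 c2 t2 - Vent M X Z R Ct l lam q mu E c1 c2 t1)) =
             (\<Sum>(j, k)\<in>{..l} \<times> {..l}. \<Sum>c1\<in>I. \<Sum>c2\<in>I.
                if enters j k c1 \<and> enters j k c2 then ?D j k c1 c2 else 0)"
    by (simp only: sum.swap[where B="{..l} \<times> {..l}"] case_prod_unfold)
  also have "\<dots> = (\<Sum>(j, k)\<in>{..l} \<times> {..l}. \<Sum>c1\<in>{c\<in>I. enters j k c}. \<Sum>c2\<in>{c\<in>I. enters j k c}.
                    ?D j k c1 c2)"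
    unfolding sum.inter_filter[OF assms] by (auto intro!: sum.cong)
  finally show ?thesis .
qed

lemma kernel_vanishes_at_exclusive:
  assumes I: "I \<subseteq> {1..d}" and t: "0 \<le> t1" "t1 < t2"
    and ker: "\<forall>c1\<in>I. (\<Sum>c2\<in>I. (Vent M X Z R Ct l lam q mu E c1 c2 t2
                                   - Vent M X Z R Ct l lam q mu E c1 c2 t1) * x c2) = 0"
    and c: "c \<in> I" and excl: "exclusive l lam E I c j k"
  shows "x c = 0"
proof -
  let ?T = "\<lambda>j k. {c\<in>I. enters j k c}"
  define Q where "Q j k = (\<Sum>c1\<in>?T j k. \<Sum>c2\<in>?T j k. x c1 * x c2 *
      (Vjk M X Z R Ct lam q mu E j k c1 c2 t2 - Vjk M X Z R Ct lam q mu E j k c1 c2 t1))" for j k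
  have fin: "finite I" using I finite_subset by blast
  have Q_nonneg: "0 \<le> Q j k" for j k
  proof (cases "is_transition l lam j k")
    case True
    then show ?thesis unfolding Q_def using I t by (intro Vjk_increment_form_nonneg) auto
  next
    case False
    then show ?thesis by (simp add: Q_def enters_def)
  qed
  have "(\<Sum>(j, k)\<in>{..l} \<times> {..l}. Q j k) = (\<Sum>c1\<in>I. x c1 * (\<Sum>c2\<in>I.
          (Vent M X Z R Ct l lam q mu E c1 c2 t2 - Vent M X Z R Ct l lam q mu E c1 c2 t1) * x c2))"
    unfolding Q_def Vent_increment_form_eq[OF fin, symmetric] by (simp add: sum_distrib_left mult_ac)
  also have "\<dots> = 0" using ker by simp
  finally have "\<forall>(j, k)\<in>{..l} \<times> {..l}. Q j k = 0"
    using sum_nonneg_eq_0_iff[of "{..l} \<times> {..l}" "\<lambda>(j, k). Q j k"] Q_nonneg by auto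
  moreover have "j \<le> l" "k \<le> l" using excl by (auto simp: exclusive_def is_transition_def)
  ultimately have "Q j k = 0" by auto
  moreover have "?T j k = {c}" using excl c by (auto simp: exclusive_def enters_def)
  moreover have "Vjk M X Z R Ct lam q mu E j k c c t1 < Vjk M X Z R Ct lam q mu E j k c c t2"
    using excl I c t by (intro Vjk_diag_strict_mono) (auto simp: exclusive_def enters_def)
  ultimately show "x c = 0" by (simp add: Q_def)
qed

lemma invertible_Vent_increment:
  assumes I: "I \<subseteq> {1..d}" "I = I1 \<union> I2" and t: "0 \<le> t1" "t1 < t2"
    and excl: "\<forall>c\<in>I1. \<exists>j k. exclusive l lam E I c j k"
    and inv2: "invertible_mat (submat_idx I2 (\<lambda>c1 c2. Vent M X Z R Ct l lam q mu E c1 c2 t2)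
                               - submat_idx I2 (\<lambda>c1 c2. Vent M X Z R Ct l lam q mu E c1 c2 t1))"
  shows "invertible_mat (submat_idx I (\<lambda>c1 c2. Vent M X Z R Ct l lam q mu E c1 c2 t2)
                         - submat_idx I (\<lambda>c1 c2. Vent M X Z R Ct l lam q mu E c1 c2 t1))"
proof -
  have fin: "finite I" "finite I2" using I finite_subset by auto
  show ?thesis
    unfolding submat_idx_diff invertible_submat_idx_iff[OF fin(1)]
  proof (intro allI impI)
    fix x
    assume ker: "\<forall>c1\<in>I. (\<Sum>c2\<in>I. (Vent M X Z R Ct l lam q mu E c1 c2 t2
                                     - Vent M X Z R Ct l lam q mu E c1 c2 t1) * x c2) = 0"
    have "\<forall>c\<in>I1. x c = 0"
      using excl kernel_vanishes_at_exclusive[OF I(1) t ker] I(2) by blast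
    then show "\<forall>c\<in>I. x c = 0"
      using kernel_vanishes_Un[of I1 I2] ker inv2 fin I(2)
      by (simp add: submat_idx_diff invertible_submat_idx_iff)
  qed
qed

end

theorem lemma4:
  fixes M :: "'a measure" and X :: "'a \<Rightarrow> real \<Rightarrow> nat"
    and Z R :: "'a \<Rightarrow> real" and Ct :: "'a \<Rightarrow> ereal"
    and l d :: nat and lam q :: "nat \<Rightarrow> nat \<Rightarrow> real \<Rightarrow> real"
    and mu :: "nat \<Rightarrow> nat set \<Rightarrow> real \<Rightarrow> real"
    and E :: "nat \<Rightarrow> nat set" and I :: "nat set"
  assumes prob: "prob_space M"
    and markov: "markov_intensities M X l lam"
    and X_meas: "(\<lambda>(\<omega>, s). X \<omega> s) \<in> measurable (M \<Otimes>\<^sub>M lborel) (count_space UNIV)"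
    and Z_meas: "Z \<in> borel_measurable M" and Z01: "\<forall>\<omega>\<in>space M. Z \<omega> \<in> {0, 1}"
    and R_meas: "R \<in> borel_measurable M" and Ct_meas: "Ct \<in> borel_measurable M"
    and indep: "prob_space.indep_set M
                  (sets (vimage_algebra (space M) X (Pi\<^sub>M UNIV (\<lambda>_. count_space UNIV))))
                  (sets (vimage_algebra (space M) (\<lambda>\<omega>. (R \<omega>, Z \<omega>, Ct \<omega>))
                          (borel \<Otimes>\<^sub>M borel \<Otimes>\<^sub>M borel)))"
    and mu_def: "\<forall>t s j c. 0 \<le> s \<and> j \<le> l \<and> c \<in> {1..d} \<and> mu_den M X R Ct t j (E c) s \<noteq> 0
                   \<longrightarrow> mu j (E c) s = mu_num M X Z R Ct t j (E c) s / mu_den M X R Ct t j (E c) s"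
    and q_meas: "\<forall>j k. is_transition l lam j k \<longrightarrow> q j k \<in> borel_measurable borel"
    and q_int: "\<forall>j k t. is_transition l lam j k \<longrightarrow> set_integrable lborel {0..t} (\<lambda>s. (q j k s)\<^sup>2 * lam j k s)"
    and E_sub: "\<forall>c\<in>{1..d}. E c \<subseteq> {1..l}"
    and I_sub: "I \<subseteq> {1..d}"
    and incr: "\<forall>c\<in>{1..d}. \<forall>j k. is_transition l lam j k \<and> j \<notin> E c \<and> k \<in> E c \<longrightarrow>
                 strict_mono_on {0..} (Vjk M X Z R Ct lam q mu E j k c c)"
    and cond: "(\<forall>c\<in>I. \<exists>j k. exclusive l lam E I c j k) \<or>
               (\<exists>I1 I2. I1 \<inter> I2 = {} \<and> I = I1 \<union> I2 \<and>
                  (\<forall>c\<in>I1. \<exists>j k. exclusive l lam E I c j k) \<and>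
                  (\<forall>t1 t2. 0 \<le> t1 \<and> t1 < t2 \<longrightarrow>
                     invertible_mat (submat_idx I2 (\<lambda>c1 c2. Vent M X Z R Ct l lam q mu E c1 c2 t2)
                                     - submat_idx I2 (\<lambda>c1 c2. Vent M X Z R Ct l lam q mu E c1 c2 t1))))"
  shows "\<forall>t1 t2. 0 \<le> t1 \<and> t1 < t2 \<longrightarrow>
           invertible_mat (submat_idx I (\<lambda>c1 c2. Vent M X Z R Ct l lam q mu E c1 c2 t2)
                           - submat_idx I (\<lambda>c1 c2. Vent M X Z R Ct l lam q mu E c1 c2 t1))"
proof -
  interpret multistate_covariance M X Z R Ct l lam d q mu E
    using prob markov X_meas Z_meas Z01 R_meas Ct_meas mu_def q_meas incr
    by (simp add: multistate_covariance_def multistate_covariance_axioms_def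
        censored_multistate_def censored_multistate_axioms_def)
  have invertible_empty: "invertible_mat (submat_idx {} A - submat_idx {} B)" for A B
    by (simp add: submat_idx_diff invertible_submat_idx_iff)
  show ?thesis
  proof (intro allI impI)
    fix t1 t2 :: real assume "0 \<le> t1 \<and> t1 < t2"
    then have t: "0 \<le> t1" "t1 < t2" by simp_all
    from cond show "invertible_mat (submat_idx I (\<lambda>c1 c2. Vent M X Z R Ct l lam q mu E c1 c2 t2)
                                    - submat_idx I (\<lambda>c1 c2. Vent M X Z R Ct l lam q mu E c1 c2 t1))"
    proof (elim disjE exE conjE)
      assume "\<forall>c\<in>I. \<exists>j k. exclusive l lam E I c j k"
      then show ?thesis by (intro invertible_Vent_increment[OF I_sub _ t, of I "{}"] invertible_empty) auto
    next
      fix I1 I2 assume "I = I1 \<union> I2" "\<forall>c\<in>I1. \<exists>j k. exclusive l lam E I c j k"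
        and "\<forall>t1 t2. 0 \<le> t1 \<and> t1 < t2 \<longrightarrow> invertible_mat (submat_idx I2
               (\<lambda>c1 c2. Vent M X Z R Ct l lam q mu E c1 c2 t2) - submat_idx I2
               (\<lambda>c1 c2. Vent M X Z R Ct l lam q mu E c1 c2 t1))"
      then show ?thesis using t by (intro invertible_Vent_increment[OF I_sub]) auto
    qed
  qed
qed

end
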